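(* If $\mathcal{O}$ is a set of upwards closed modalities, then for all $r,r'\in TT\mathbf{1}$ the following are equivalent: (1) $r\preccurlyeq r'$; (2) for all $A\subseteq T\mathbf{1}$, $r[\in A]\trianglelefteq r'[\in {\trianglelefteq}[A]]$; (3) for all $o\in\mathcal{O}$ and all $A\subseteq T\mathbf{1}$, $r\in o(A)$ implies $r'\in o({\trianglelefteq}[A])$.
   Context: $\Sigma$ is a signature of effect operations with arities $\alpha^n\to\alpha$, $\mathbf{N}\times\alpha^n\to\alpha$, $\alpha^{\mathbf{N}}\to\alpha$ or $\mathbf{N}\times\alpha^{\mathbf{N}}\to\alpha$. $TX$ is the set of possibly infinite labelled trees with leaves $\bot$ or elements of $X$ and internal nodes labelled by operations (or $\sigma_m$, $m\in\mathbb{N}$) with children according to arity; $t\le t'$ iff $t$ is obtained from $t'$ by replacing subtrees with $\bot$. $\mathbf{1}=\{*\}$. A set $\mathcal{O}$ of modalities is given with $[\![o]\!]\subseteq T\mathbf{1}$; $o$ is upwards closed if $[\![o]\!]$ is upward closed under $\le$. For $t\in TX$, $P\subseteq X$, $t[\in P]\in T\mathbf{1}$ replaces leaves in $P$ by $*$ and other $X$-leaves by $\bot$; $o(A)=\{t\in TX\mid t[\in A]\in[\![o]\!]\}$. $\mathcal{T}$ is the least class of formulas containing $o(\top),o(\bot)$ ($o\in\mathcal{O}$) closed under arbitrary $\bigvee,\bigwedge$, with $[\![o(\top)]\!]=o(\{*\})$, $[\![o(\bot)]\!]=o(\emptyset)$, unions/intersections. On $T\mathbf{1}$: $t\trianglelefteq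 t'$ iff $\forall\Phi\in\mathcal{T}$, $t\in[\![\Phi]\!]\Rightarrow t'\in[\![\Phi]\!]$. On $TT\mathbf{1}$: $r\preccurlyeq r'$ iff $\forall o\in\mathcal{O}\,\forall\Phi\in\mathcal{T}$, $r\in o([\![\Phi]\!])\Rightarrow r'\in o([\![\Phi]\!])$. For a relation $R$ and set $A$, $R[A]=\{y\mid\exists x\in A,\ xRy\}$. *)

theory Defs
  imports Main "HOL-Library.Extended_Nat"
begin

text \<open>Node labels of type 'l range over all
  operation symbols of the signature, where an operation with a natural-number
  parameter (arity N x alpha^n -> alpha or N x alpha^N -> alpha) contributes one
  label per parameter value, together with the labels sigma_m. The arity of a label
  is given by ar :: 'l => enat (a natural number n, or infinity for alpha^N).
  Children are indexed by nat; children outside the arity are required to be Bot.\<close>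

codatatype (labels: 'l, leaves: 'x) tree =
    Bot
  | Leaf 'x
  | Node 'l "nat \<Rightarrow> ('l, 'x) tree"

coinductive wf_tree :: "('l \<Rightarrow> enat) \<Rightarrow> ('l, 'x) tree \<Rightarrow> bool" for ar where
  wf_Bot: "wf_tree ar Bot"
| wf_Leaf: "wf_tree ar (Leaf x)"
| wf_Node: "(\<And>i. enat i < ar l \<Longrightarrow> wf_tree ar (ts i)) \<Longrightarrow>
            (\<And>i. ar l \<le> enat i \<Longrightarrow> ts i = Bot) \<Longrightarrow> wf_tree ar (Node l ts)"

definition Tset :: "('l \<Rightarrow> enat) \<Rightarrow> 'x set \<Rightarrow> ('l, 'x) tree set" where
  "Tset ar X = {t. wf_tree ar t \<and> leaves t \<subseteq> X}"

abbreviation T1 :: "('l \<Rightarrow> enat) \<Rightarrow> ('l, unit) tree set" where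
  "T1 ar \<equiv> Tset ar UNIV"

coinductive tree_le :: "('l, 'x) tree \<Rightarrow> ('l, 'x) tree \<Rightarrow> bool" where
  le_Bot: "tree_le Bot t"
| le_Leaf: "tree_le (Leaf x) (Leaf x)"
| le_Node: "(\<And>i. tree_le (ts i) (ts' i)) \<Longrightarrow> tree_le (Node l ts) (Node l ts')"

primcorec restr :: "'x set \<Rightarrow> ('l, 'x) tree \<Rightarrow> ('l, unit) tree" where
  "restr P t = (case t of
      Bot \<Rightarrow> Bot
    | Leaf x \<Rightarrow> (if x \<in> P then Leaf () else Bot)
    | Node l ts \<Rightarrow> Node l (\<lambda>i. restr P (ts i)))"

definition modal :: "('l \<Rightarrow> enat) \<Rightarrow> 'x set \<Rightarrow> ('m \<Rightarrow> ('l, unit) tree set) \<Rightarrow> 'm \<Rightarrow> 'x set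
                     \<Rightarrow> ('l, 'x) tree set" where
  "modal ar X sem \<mu> A = {t \<in> Tset ar X. restr A t \<in> sem \<mu>}"

definition upwards_closed :: "('l \<Rightarrow> enat) \<Rightarrow> ('m \<Rightarrow> ('l, unit) tree set) \<Rightarrow> 'm \<Rightarrow> bool" where
  "upwards_closed ar sem \<mu> \<longleftrightarrow>
     (\<forall>t t'. t \<in> sem \<mu> \<longrightarrow> t' \<in> T1 ar \<longrightarrow> tree_le t t' \<longrightarrow> t' \<in> sem \<mu>)"

text \<open>Denotations of the formulas in the class \<T> (subsets of T 1).\<close>
inductive_set Fml :: "('l \<Rightarrow> enat) \<Rightarrow> 'm set \<Rightarrow> ('m \<Rightarrow> ('l, unit) tree set)
                      \<Rightarrow> ('l, unit) tree set set" for ar Mods sem where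
  Fml_top: "\<mu> \<in> Mods \<Longrightarrow> modal ar UNIV sem \<mu> {()} \<in> Fml ar Mods sem"
| Fml_bot: "\<mu> \<in> Mods \<Longrightarrow> modal ar UNIV sem \<mu> {} \<in> Fml ar Mods sem"
| Fml_Or: "(\<And>\<Phi>. \<Phi> \<in> S \<Longrightarrow> \<Phi> \<in> Fml ar Mods sem) \<Longrightarrow> \<Union> S \<in> Fml ar Mods sem"
| Fml_And: "(\<And>\<Phi>. \<Phi> \<in> S \<Longrightarrow> \<Phi> \<in> Fml ar Mods sem) \<Longrightarrow> T1 ar \<inter> \<Inter> S \<in> Fml ar Mods sem"

definition tri :: "('l \<Rightarrow> enat) \<Rightarrow> 'm set \<Rightarrow> ('m \<Rightarrow> ('l, unit) tree set)
                   \<Rightarrow> ('l, unit) tree \<Rightarrow> ('l, unit) tree \<Rightarrow> bool" where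
  "tri ar Mods sem t t' \<longleftrightarrow> t \<in> T1 ar \<and> t' \<in> T1 ar \<and>
     (\<forall>\<Phi> \<in> Fml ar Mods sem. t \<in> \<Phi> \<longrightarrow> t' \<in> \<Phi>)"

definition tri_img :: "('l \<Rightarrow> enat) \<Rightarrow> 'm set \<Rightarrow> ('m \<Rightarrow> ('l, unit) tree set)
                   \<Rightarrow> ('l, unit) tree set \<Rightarrow> ('l, unit) tree set" where
  "tri_img ar Mods sem A = {y. \<exists>x \<in> A. tri ar Mods sem x y}"

definition prec :: "('l \<Rightarrow> enat) \<Rightarrow> 'm set \<Rightarrow> ('m \<Rightarrow> ('l, unit) tree set)
                   \<Rightarrow> ('l, ('l, unit) tree) tree \<Rightarrow> ('l, ('l, unit) tree) tree \<Rightarrow> bool" where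
  "prec ar Mods sem r r' \<longleftrightarrow>
     (\<forall>\<mu> \<in> Mods. \<forall>\<Phi> \<in> Fml ar Mods sem.
        r \<in> modal ar (T1 ar) sem \<mu> \<Phi> \<longrightarrow> r' \<in> modal ar (T1 ar) sem \<mu> \<Phi>)"

end

theory Submission
  imports Defs
begin

text \<open>Restricting a tree r in T T 1 to A and then reading off o(\<top>) or o(\<bot>) is the same as
  reading off o(A) or o(\<emptyset>) on r itself, so the formulas of \<T> evaluated at r[\<in> A] are
  determined by the modal properties of r. Since a formula is closed under \<unlhd>, the set \<unlhd>[A] is
  itself a formula (a union over a \<in> A of the intersection of the formulas containing a), and it
  contains A; for upwards closed modalities r \<in> o(A) therefore gives r \<in> o(\<unlhd>[A]), which
  connects all three conditions.\<close>

lemma restr_Bot [simp]: "restr P Bot = Bot"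
  by (subst restr.code) simp

lemma restr_Leaf [simp]: "restr P (Leaf x) = (if x \<in> P then Leaf () else Bot)"
  by (subst restr.code) simp

lemma restr_Node [simp]: "restr P (Node l ts) = Node l (\<lambda>i. restr P (ts i))"
  by (subst restr.code) simp

lemma wf_tree_restr: "wf_tree ar t \<Longrightarrow> wf_tree ar (restr P t)"
proof (coinduction arbitrary: t)
  case wf_tree
  then show ?case by (cases rule: wf_tree.cases) auto
qed

lemma tree_le_restr_mono: "A \<subseteq> B \<Longrightarrow> tree_le (restr A t) (restr B t)"
proof (coinduction arbitrary: t)
  case tree_le
  then show ?case by (cases t) auto
qed

lemma restr_restr: "restr B (restr A t) = restr {x \<in> A. () \<in> B} t"
proof (coinduction arbitrary: t)
  case Eq_tree
  then show ?case by (cases t) auto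
qed

lemma restr_modal_iff:
  assumes "r \<in> Tset ar X"
  shows "restr A r \<in> modal ar UNIV sem \<mu> B \<longleftrightarrow> r \<in> modal ar X sem \<mu> {x \<in> A. () \<in> B}"
  using assms by (auto simp: modal_def restr_restr Tset_def wf_tree_restr)

lemma modal_mono_upwards_closed:
  assumes "upwards_closed ar sem \<mu>" and "A \<subseteq> B" and "r \<in> modal ar X sem \<mu> A"
  shows "r \<in> modal ar X sem \<mu> B"
  using assms tree_le_restr_mono[OF \<open>A \<subseteq> B\<close>, of r]
  by (auto simp: upwards_closed_def modal_def Tset_def wf_tree_restr)

lemma Fml_subset_T1: "\<Phi> \<in> Fml ar Mods sem \<Longrightarrow> \<Phi> \<subseteq> T1 ar"
  by (induct rule: Fml.induct) (auto simp: modal_def)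

lemma tri_refl: "x \<in> T1 ar \<Longrightarrow> tri ar Mods sem x x"
  by (simp add: tri_def)

lemma subset_tri_img: "A \<subseteq> T1 ar \<Longrightarrow> A \<subseteq> tri_img ar Mods sem A"
  by (auto simp: tri_img_def intro: tri_refl)

lemma tri_img_empty [simp]: "tri_img ar Mods sem {} = {}"
  by (simp add: tri_img_def)

lemma tri_img_Fml: "\<Phi> \<in> Fml ar Mods sem \<Longrightarrow> tri_img ar Mods sem \<Phi> = \<Phi>"
  using Fml_subset_T1 subset_tri_img by (fastforce simp: tri_img_def tri_def)

lemma tri_img_in_Fml:
  assumes "A \<subseteq> T1 ar"
  shows "tri_img ar Mods sem A \<in> Fml ar Mods sem"
proof -
  let ?F = "Fml ar Mods sem"
  have "tri_img ar Mods sem A = (\<Union>a \<in> A. T1 ar \<inter> \<Inter> {\<Phi> \<in> ?F. a \<in> \<Phi>})"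
    using assms by (auto simp: tri_img_def tri_def)
  also have "\<dots> \<in> ?F"
    by (rule Fml_Or) (auto intro: Fml_And)
  finally show ?thesis .
qed

lemma modal_tri_img_if_prec:
  assumes "prec ar Mods sem r r'" and "upwards_closed ar sem \<mu>" and "\<mu> \<in> Mods"
    and "A \<subseteq> T1 ar" and "r \<in> modal ar (T1 ar) sem \<mu> A"
  shows "r' \<in> modal ar (T1 ar) sem \<mu> (tri_img ar Mods sem A)"
proof -
  have "r \<in> modal ar (T1 ar) sem \<mu> (tri_img ar Mods sem A)"
    using assms(2) subset_tri_img[OF assms(4)] assms(5) by (rule modal_mono_upwards_closed)
  then show ?thesis
    using assms(1,3) tri_img_in_Fml[OF assms(4)] by (auto simp: prec_def)
qed

lemma prec_if_modal_tri_img: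
  assumes "\<And>\<mu> A. \<mu> \<in> Mods \<Longrightarrow> A \<subseteq> T1 ar \<Longrightarrow> r \<in> modal ar (T1 ar) sem \<mu> A
             \<Longrightarrow> r' \<in> modal ar (T1 ar) sem \<mu> (tri_img ar Mods sem A)"
  shows "prec ar Mods sem r r'"
  unfolding prec_def using assms Fml_subset_T1 tri_img_Fml by metis

lemma modal_tri_img_if_tri_restr:
  assumes "r \<in> Tset ar (T1 ar)" and "r' \<in> Tset ar (T1 ar)" and "\<mu> \<in> Mods"
    and "tri ar Mods sem (restr A r) (restr (tri_img ar Mods sem A) r')"
    and "r \<in> modal ar (T1 ar) sem \<mu> A"
  shows "r' \<in> modal ar (T1 ar) sem \<mu> (tri_img ar Mods sem A)"
proof -
  have "restr A r \<in> modal ar UNIV sem \<mu> {()}"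
    using assms(1,5) by (simp add: restr_modal_iff)
  then have "restr (tri_img ar Mods sem A) r' \<in> modal ar UNIV sem \<mu> {()}"
    using assms(4) Fml_top[OF assms(3)] by (auto simp: tri_def)
  then show ?thesis
    using assms(2) by (simp add: restr_modal_iff)
qed

lemma tri_restr_if_modal_tri_img:
  assumes r: "r \<in> Tset ar (T1 ar)" and r': "r' \<in> Tset ar (T1 ar)" and A: "A \<subseteq> T1 ar"
    and modal: "\<And>\<mu> A. \<mu> \<in> Mods \<Longrightarrow> A \<subseteq> T1 ar \<Longrightarrow> r \<in> modal ar (T1 ar) sem \<mu> A
             \<Longrightarrow> r' \<in> modal ar (T1 ar) sem \<mu> (tri_img ar Mods sem A)"
  shows "tri ar Mods sem (restr A r) (restr (tri_img ar Mods sem A) r')"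
proof -
  let ?s = "restr A r" and ?s' = "restr (tri_img ar Mods sem A) r'"
  have "?s \<in> \<Phi> \<longrightarrow> ?s' \<in> \<Phi>" if "\<Phi> \<in> Fml ar Mods sem" for \<Phi>
    using that
  proof (induct rule: Fml.induct)
    case (Fml_top \<mu>)
    then show ?case using r r' A modal by (simp add: restr_modal_iff)
  next
    case (Fml_bot \<mu>)
    then show ?case using r r' modal[of \<mu> "{}"] by (simp add: restr_modal_iff)
  next
    case (Fml_Or S)
    then show ?case by blast
  next
    case (Fml_And S)
    then show ?case using r' by (auto simp: Tset_def wf_tree_restr)
  qed
  then show ?thesis
    using r r' by (auto simp: tri_def Tset_def wf_tree_restr)
qed

theorem lemma4p14:
  fixes ar :: "'l \<Rightarrow> enat"
    and Mods :: "'m set"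
    and sem :: "'m \<Rightarrow> ('l, unit) tree set"
    and r r' :: "('l, ('l, unit) tree) tree"
  assumes sem_T1: "\<forall>\<mu> \<in> Mods. sem \<mu> \<subseteq> T1 ar"
    and up: "\<forall>\<mu> \<in> Mods. upwards_closed ar sem \<mu>"
    and r: "r \<in> Tset ar (T1 ar)"
    and r': "r' \<in> Tset ar (T1 ar)"
  shows "(prec ar Mods sem r r'
            \<longleftrightarrow> (\<forall>A \<subseteq> T1 ar. tri ar Mods sem (restr A r) (restr (tri_img ar Mods sem A) r')))
       \<and> (prec ar Mods sem r r'
            \<longleftrightarrow> (\<forall>\<mu> \<in> Mods. \<forall>A \<subseteq> T1 ar.
                   r \<in> modal ar (T1 ar) sem \<mu> A \<longrightarrow> r' \<in> modal ar (T1 ar) sem \<mu> (tri_img ar Mods sem A)))"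
proof -
  let ?modal = "\<forall>\<mu> \<in> Mods. \<forall>A \<subseteq> T1 ar.
      r \<in> modal ar (T1 ar) sem \<mu> A \<longrightarrow> r' \<in> modal ar (T1 ar) sem \<mu> (tri_img ar Mods sem A)"
  let ?tri = "\<forall>A \<subseteq> T1 ar. tri ar Mods sem (restr A r) (restr (tri_img ar Mods sem A) r')"
  have "prec ar Mods sem r r' \<longleftrightarrow> ?modal"
    using up modal_tri_img_if_prec prec_if_modal_tri_img by metis
  moreover have "?modal \<longleftrightarrow> ?tri"
    using r r' modal_tri_img_if_tri_restr tri_restr_if_modal_tri_img by metis
  ultimately show ?thesis by blast
qed

end
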